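(* Let $X$ be an isotropic $L$-space and let $P\colon X\to X^{\rm c}$ be a convexifying operator. Then $P(\theta)=\theta$. Moreover, if $x\in X^{\rm inv}$, then $P(x)\in X^{\rm inv}$ and $P(x')=(P(x))'$.
   Context: A semilinear space is a set $X$ with an addition and a multiplication by real numbers such that for all $x,y,z\in X$, $\alpha,\beta\in\mathbb R$: $x+y=y+x$; $x+(y+z)=(x+y)+z$; there is $\theta\in X$ with $x+\theta=x$; $\alpha(x+y)=\alpha x+\alpha y$; $\alpha(\beta x)=(\alpha\beta)x$; $1\cdot x=x$, $0\cdot x=\theta$ (the law $(\alpha+\beta)x=\alpha x+\beta x$ is not assumed). An element $x$ is convex if $(\alpha+\beta)x=\alpha x+\beta x$ for all $\alpha,\beta\ge0$; $X^{\rm c}$ denotes the set of convex elements. An element $x$ is invertible if there is $x'\in X$ with $x+x'=\theta$ ($x'$ is then unique and called the inverse of $x$); $X^{\rm inv}$ denotes the set of invertible elements. An $L$-space is a semilinear space $X$ with a metric $h_X$ such that $(X,h_X)$ is complete and separable, and for all $x,y,z\in X$, $\alpha\in\mathbb R$: $h_X(\alpha x,\alpha y)=|\alpha|h_X(x,y)$ and $h_X(x+z,y+z)\le h_X(x,y)$. It is isotropic if the last inequality is always an equality. A convexifying operator is a surjective map $P\colon X\to X^{\rm c}$ such that $h_X(P(x),P(y))\le h_X(x,y)$, $P\circ P=P$, and $P(\alpha x+\beta y)=\alpha P(x)+\beta P(y)$ for all $x,y\in X$, $\alpha,\beta\in\mathbb R$. *)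

theory Defs
  imports Complex_Main "HOL-Library.Countable_Set"
begin

definition semilinear_space :: "('a \<Rightarrow> 'a \<Rightarrow> 'a) \<Rightarrow> (real \<Rightarrow> 'a \<Rightarrow> 'a) \<Rightarrow> 'a \<Rightarrow> bool" where
  "semilinear_space add smul th \<longleftrightarrow>
     (\<forall>x y. add x y = add y x) \<and>
     (\<forall>x y z. add x (add y z) = add (add x y) z) \<and>
     (\<forall>x. add x th = x) \<and>
     (\<forall>a x y. smul a (add x y) = add (smul a x) (smul a y)) \<and>
     (\<forall>a b x. smul a (smul b x) = smul (a * b) x) \<and>
     (\<forall>x. smul 1 x = x) \<and>
     (\<forall>x. smul 0 x = th)"

definition convex_elems :: "('a \<Rightarrow> 'a \<Rightarrow> 'a) \<Rightarrow> (real \<Rightarrow> 'a \<Rightarrow> 'a) \<Rightarrow> 'a set" where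
  "convex_elems add smul =
     {x. \<forall>a b. a \<ge> 0 \<longrightarrow> b \<ge> 0 \<longrightarrow> smul (a + b) x = add (smul a x) (smul b x)}"

definition invertible_elems :: "('a \<Rightarrow> 'a \<Rightarrow> 'a) \<Rightarrow> 'a \<Rightarrow> 'a set" where
  "invertible_elems add th = {x. \<exists>y. add x y = th}"

text \<open>The (unique, for invertible x) inverse x'.\<close>
definition sl_inverse :: "('a \<Rightarrow> 'a \<Rightarrow> 'a) \<Rightarrow> 'a \<Rightarrow> 'a \<Rightarrow> 'a" where
  "sl_inverse add th x = (THE y. add x y = th)"

definition is_metric :: "('a \<Rightarrow> 'a \<Rightarrow> real) \<Rightarrow> bool" where
  "is_metric h \<longleftrightarrow>
     (\<forall>x y. h x y = 0 \<longleftrightarrow> x = y) \<and>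
     (\<forall>x y. h x y = h y x) \<and>
     (\<forall>x y z. h x z \<le> h x y + h y z) \<and>
     (\<forall>x y. h x y \<ge> 0)"

definition metric_complete :: "('a \<Rightarrow> 'a \<Rightarrow> real) \<Rightarrow> bool" where
  "metric_complete h \<longleftrightarrow>
     (\<forall>s :: nat \<Rightarrow> 'a. (\<forall>e>0. \<exists>N. \<forall>m\<ge>N. \<forall>n\<ge>N. h (s m) (s n) < e) \<longrightarrow>
        (\<exists>l. \<forall>e>0. \<exists>N. \<forall>n\<ge>N. h (s n) l < e))"

definition metric_separable :: "('a \<Rightarrow> 'a \<Rightarrow> real) \<Rightarrow> bool" where
  "metric_separable h \<longleftrightarrow>
     (\<exists>D. countable D \<and> (\<forall>x. \<forall>e>0. \<exists>d\<in>D. h x d < e))"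

definition L_space :: "('a \<Rightarrow> 'a \<Rightarrow> 'a) \<Rightarrow> (real \<Rightarrow> 'a \<Rightarrow> 'a) \<Rightarrow> 'a \<Rightarrow> ('a \<Rightarrow> 'a \<Rightarrow> real) \<Rightarrow> bool" where
  "L_space add smul th h \<longleftrightarrow>
     semilinear_space add smul th \<and> is_metric h \<and> metric_complete h \<and> metric_separable h \<and>
     (\<forall>a x y. h (smul a x) (smul a y) = \<bar>a\<bar> * h x y) \<and>
     (\<forall>x y z. h (add x z) (add y z) \<le> h x y)"

definition isotropic_L_space :: "('a \<Rightarrow> 'a \<Rightarrow> 'a) \<Rightarrow> (real \<Rightarrow> 'a \<Rightarrow> 'a) \<Rightarrow> 'a \<Rightarrow> ('a \<Rightarrow> 'a \<Rightarrow> real) \<Rightarrow> bool" where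
  "isotropic_L_space add smul th h \<longleftrightarrow>
     L_space add smul th h \<and> (\<forall>x y z. h (add x z) (add y z) = h x y)"

definition convexifying_operator :: "('a \<Rightarrow> 'a \<Rightarrow> 'a) \<Rightarrow> (real \<Rightarrow> 'a \<Rightarrow> 'a) \<Rightarrow> ('a \<Rightarrow> 'a \<Rightarrow> real) \<Rightarrow> ('a \<Rightarrow> 'a) \<Rightarrow> bool" where
  "convexifying_operator add smul h P \<longleftrightarrow>
     range P = convex_elems add smul \<and>
     (\<forall>x y. h (P x) (P y) \<le> h x y) \<and>
     (\<forall>x. P (P x) = P x) \<and>
     (\<forall>a b x y. P (add (smul a x) (smul b y)) = add (smul a (P x)) (smul b (P y)))"

end

theory Submission
  imports Defs
begin

text \<open>Linearity with both scalars \<open>0\<close> gives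
  \<open>P \<theta> = 0 P(\<theta>) + 0 P(\<theta>) = \<theta>\<close>, and with both scalars \<open>1\<close> it gives
  \<open>P x + P x' = P (x + x') = P \<theta> = \<theta>\<close>, so \<open>P x'\<close> is the (unique) inverse of \<open>P x\<close>.\<close>

definition semilinear_map :: "('a \<Rightarrow> 'a \<Rightarrow> 'a) \<Rightarrow> (real \<Rightarrow> 'a \<Rightarrow> 'a) \<Rightarrow> ('a \<Rightarrow> 'a) \<Rightarrow> bool" where
  "semilinear_map add smul P \<longleftrightarrow>
     (\<forall>a b x y. P (add (smul a x) (smul b y)) = add (smul a (P x)) (smul b (P y)))"

lemma convexifying_operator_imp_semilinear_map:
  "convexifying_operator add smul h P \<Longrightarrow> semilinear_map add smul P"
  by (simp add: convexifying_operator_def semilinear_map_def)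

lemma sl_inverse_eqI:
  assumes sl: "semilinear_space add smul th" and xy: "add x y = th"
  shows "sl_inverse add th x = y"
  unfolding sl_inverse_def
proof (rule the_equality)
  have comm: "\<And>x y. add x y = add y x"
    and assoc: "\<And>x y z. add x (add y z) = add (add x y) z"
    and neutral: "\<And>x. add x th = x"
    using sl unfolding semilinear_space_def by blast+
  fix z assume xz: "add x z = th"
  have "z = add z (add x y)" by (simp add: xy neutral)
  also have "\<dots> = add (add x z) y" by (metis assoc comm)
  also have "\<dots> = y" by (metis xz comm neutral)
  finally show "z = y" .
qed (rule xy)

lemma semilinear_map_zero:
  assumes sl: "semilinear_space add smul th" and P: "semilinear_map add smul P"
  shows "P th = th"
proof -
  have "P (add (smul 0 th) (smul 0 th)) = add (smul 0 (P th)) (smul 0 (P th))"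
    using P by (simp add: semilinear_map_def)
  then show ?thesis
    using sl by (simp add: semilinear_space_def)
qed

lemma semilinear_map_add:
  assumes sl: "semilinear_space add smul th" and P: "semilinear_map add smul P"
  shows "P (add x y) = add (P x) (P y)"
proof -
  have "P (add (smul 1 x) (smul 1 y)) = add (smul 1 (P x)) (smul 1 (P y))"
    using P by (simp add: semilinear_map_def)
  then show ?thesis
    using sl by (simp add: semilinear_space_def)
qed

lemma semilinear_map_inverse:
  assumes sl: "semilinear_space add smul th" and P: "semilinear_map add smul P"
    and x: "x \<in> invertible_elems add th"
  shows "P x \<in> invertible_elems add th"
    and "P (sl_inverse add th x) = sl_inverse add th (P x)"
proof -
  obtain y where xy: "add x y = th"
    using x by (auto simp: invertible_elems_def)
  have Pxy: "add (P x) (P y) = th"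
    using semilinear_map_add[OF sl P, of x y] semilinear_map_zero[OF sl P] xy by simp
  then show "P x \<in> invertible_elems add th"
    by (auto simp: invertible_elems_def)
  show "P (sl_inverse add th x) = sl_inverse add th (P x)"
    using sl_inverse_eqI[OF sl xy] sl_inverse_eqI[OF sl Pxy] by simp
qed

theorem lemma2:
  fixes add :: "'a \<Rightarrow> 'a \<Rightarrow> 'a" and smul :: "real \<Rightarrow> 'a \<Rightarrow> 'a" and th :: 'a
    and h :: "'a \<Rightarrow> 'a \<Rightarrow> real" and P :: "'a \<Rightarrow> 'a"
  assumes "isotropic_L_space add smul th h"
    and "convexifying_operator add smul h P"
  shows "P th = th \<and>
    (\<forall>x \<in> invertible_elems add th.
       P x \<in> invertible_elems add th \<and> P (sl_inverse add th x) = sl_inverse add th (P x))"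
proof -
  have sl: "semilinear_space add smul th"
    using assms(1) by (simp add: isotropic_L_space_def L_space_def)
  have P: "semilinear_map add smul P"
    using assms(2) by (rule convexifying_operator_imp_semilinear_map)
  show ?thesis
    using semilinear_map_zero[OF sl P] semilinear_map_inverse[OF sl P] by blast
qed

end
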